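(* Let $\Phi$ be either the squared hinge loss $\Phi(u)=\max(1-u,0)^2$ or the modified Huber loss ($\Phi(u)=0$ for $u\ge1$, $\Phi(u)=-4u$ for $u\le-1$, $\Phi(u)=(1-u)^2$ otherwise). Then there do not exist a convex set $\bar{\mathcal{D}}\subseteq\mathbb{R}$ with $[0,1]\subseteq\bar{\mathcal{D}}$, a strictly convex differentiable $\bar h:\bar{\mathcal{D}}\to\mathbb{R}$ and a continuous bijection $\bar t:\bar{\mathcal{D}}\to\mathbb{R}$ such that $$q\Phi(v)+(1-q)\Phi(-v)-\inf_{v'\in\mathbb{R}}\big(q\Phi(v')+(1-q)\Phi(-v')\big)=D_{\bar h}(q,\bar t^{-1}(v))\quad\text{for all } v\in\mathbb{R},\,q\in[0,1].$$
   Context: $D_{\bar h}(a,b)=\bar h(a)-\bar h(b)-\bar h'(b)(a-b)$ denotes the Bregman divergence of $\bar h$. *)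

theory Defs
  imports "HOL-Analysis.Analysis"
begin

definition sq_hinge :: "real \<Rightarrow> real" where
  "sq_hinge u = (max (1 - u) 0)^2"

definition mod_huber :: "real \<Rightarrow> real" where
  "mod_huber u = (if u \<ge> 1 then 0 else if u \<le> -1 then -4 * u else (1 - u)^2)"

definition strict_convex_on :: "real set \<Rightarrow> (real \<Rightarrow> real) \<Rightarrow> bool" where
  "strict_convex_on S f \<longleftrightarrow>
     (\<forall>x\<in>S. \<forall>y\<in>S. \<forall>u::real. x \<noteq> y \<and> 0 < u \<and> u < 1 \<longrightarrow>
        f ((1 - u) * x + u * y) < (1 - u) * f x + u * f y)"

definition bregman :: "(real \<Rightarrow> real) \<Rightarrow> (real \<Rightarrow> real) \<Rightarrow> real \<Rightarrow> real \<Rightarrow> real" where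
  "bregman h h' a b = h a - h b - h' b * (a - b)"

end

theory Submission
  imports Defs
begin

text \<open>
  Take \<open>q = 1\<close>. Both losses are nonnegative and vanish on \<open>[1, \<infinity>)\<close>, so the left-hand
  side is \<open>0\<close> for every \<open>v \<ge> 1\<close>. By strict convexity the Bregman divergence
  \<open>D(1, b)\<close> vanishes only at \<open>b = 1\<close>, hence \<open>t\<^sup>-\<^sup>1\<close> would map the whole
  half-line \<open>[1, \<infinity>)\<close> to \<open>1\<close>, contradicting injectivity of \<open>t\<^sup>-\<^sup>1\<close>.
\<close>

lemma strict_convex_on_imp_convex_on:
  assumes "convex S" and "strict_convex_on S f"
  shows "convex_on S f"
proof (rule convex_onI)
  fix u x y :: real
  assume "0 < u" "u < 1" "x \<in> S" "y \<in> S"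
  then show "f ((1 - u) *\<^sub>R x + u *\<^sub>R y) \<le> (1 - u) * f x + u * f y"
  proof (cases "x = y")
    case False
    with \<open>0 < u\<close> \<open>u < 1\<close> \<open>x \<in> S\<close> \<open>y \<in> S\<close> assms(2)
    have "f ((1 - u) * x + u * y) < (1 - u) * f x + u * f y"
      unfolding strict_convex_on_def by blast
    then show ?thesis by simp
  qed (simp add: algebra_simps)
qed (fact assms(1))

text \<open>Unlike \<open>convex_on_imp_above_tangent\<close>, the point \<open>c\<close> may lie on the boundary of \<open>S\<close>.\<close>
lemma convex_on_above_tangent_within:
  fixes f :: "real \<Rightarrow> real"
  assumes convex: "convex_on S f" and c: "c \<in> S" and x: "x \<in> S"
    and deriv: "(f has_real_derivative f') (at c within S)"
  shows "f' * (x - c) \<le> f x - f c"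
proof -
  define g where "g u = f (c + u * (x - c))" for u
  have segment: "(\<lambda>u. c + u * (x - c)) ` {0..1} \<subseteq> S"
  proof clarify
    fix u :: real assume "u \<in> {0..1}"
    then have "(1 - u) *\<^sub>R c + u *\<^sub>R x \<in> S"
      using convexD[OF convex_on_imp_convex[OF convex] c x, of "1 - u" u] by simp
    then show "c + u * (x - c) \<in> S" by (simp add: algebra_simps)
  qed
  have "(g has_real_derivative f' * (x - c)) (at 0 within {0..1})"
  proof -
    have inner: "((\<lambda>u. c + u * (x - c)) has_real_derivative x - c) (at 0 within {0..1})"
      by (auto intro!: derivative_eq_intros)
    have outer: "(f has_real_derivative f') (at c within (\<lambda>u. c + u * (x - c)) ` {0..1})"
      using DERIV_subset[OF deriv segment] .
    show ?thesis
      unfolding g_def using DERIV_image_chain[OF _ inner] outer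
      by (simp add: comp_def mult.commute)
  qed
  then have lim: "((\<lambda>u. (g u - g 0) / (u - 0)) \<longlongrightarrow> f' * (x - c)) (at_right 0)"
    using has_field_derivative_iff at_within_Icc_at_right[of "0::real" 1] by force
  have "\<forall>\<^sub>F u in at_right 0. (g u - g 0) / (u - 0) \<le> g 1 - g 0"
    unfolding eventually_at_right_field
  proof (intro exI[of _ 1] conjI allI impI)
    show "(0::real) < 1" by simp
    fix u :: real assume u: "0 < u" "u < 1"
    have "f ((1 - u) *\<^sub>R c + u *\<^sub>R x) \<le> (1 - u) * f c + u * f x"
      using convex_onD[OF convex, of u c x] u c x by simp
    then have "g u - g 0 \<le> u * (g 1 - g 0)"
      unfolding g_def by (simp add: algebra_simps)
    then show "(g u - g 0) / (u - 0) \<le> g 1 - g 0"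
      using u by (simp add: divide_simps mult.commute)
  qed
  from tendsto_upperbound[OF lim this] show ?thesis
    unfolding g_def by simp
qed

lemma bregman_pos:
  assumes "convex D" and strict: "strict_convex_on D h"
    and a: "a \<in> D" and b: "b \<in> D" and "a \<noteq> b"
    and deriv: "(h has_real_derivative h' b) (at b within D)"
  shows "0 < bregman h h' a b"
proof -
  define m where "m = (1 - 1/2) * b + (1/2) * a"
  have "m \<in> D"
    using convexD[OF \<open>convex D\<close> b a, of "1 - 1/2" "1/2"] unfolding m_def by simp
  have "h m < (1 - 1/2) * h b + (1/2) * h a"
    using strict[unfolded strict_convex_on_def, rule_format, of b a "1/2"] a b \<open>a \<noteq> b\<close>
    unfolding m_def by simp
  moreover have "h' b * (m - b) \<le> h m - h b"
    using convex_on_above_tangent_within[OF strict_convex_on_imp_convex_on[OF \<open>convex D\<close> strict]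
        b \<open>m \<in> D\<close> deriv] .
  ultimately show ?thesis
    unfolding bregman_def m_def by (simp add: algebra_simps)
qed

lemma
  assumes "\<Phi> = sq_hinge \<or> \<Phi> = mod_huber"
  shows loss_nonneg: "0 \<le> \<Phi> v"
    and loss_vanishes_above_one: "1 \<le> v \<Longrightarrow> \<Phi> v = 0"
  using assms by (auto simp: sq_hinge_def mod_huber_def)

lemma INF_nonneg_attained_eq_0:
  fixes f :: "'a \<Rightarrow> real"
  assumes "\<And>x. 0 \<le> f x" and "f x\<^sub>0 = 0"
  shows "(INF x. f x) = 0"
  using assms cInf_eq_minimum[of 0 "range f"] by (metis rangeE rangeI)

theorem propositionF1:
  fixes \<Phi> :: "real \<Rightarrow> real"
  assumes "\<Phi> = sq_hinge \<or> \<Phi> = mod_huber"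
  shows "\<not> (\<exists>(D :: real set) (h :: real \<Rightarrow> real) (h' :: real \<Rightarrow> real) (t :: real \<Rightarrow> real).
            convex D \<and> {0..1} \<subseteq> D \<and>
            strict_convex_on D h \<and>
            (\<forall>x\<in>D. (h has_real_derivative h' x) (at x within D)) \<and>
            continuous_on D t \<and> bij_betw t D UNIV \<and>
            (\<forall>v q. q \<in> {0..1} \<longrightarrow>
               q * \<Phi> v + (1 - q) * \<Phi> (- v)
                 - (INF v'. q * \<Phi> v' + (1 - q) * \<Phi> (- v'))
               = bregman h h' q (inv_into D t v)))"
    (is "\<not> ?representable")
proof
  assume ?representable
  then obtain D h h' t where "convex D" "{0..1} \<subseteq> D" "strict_convex_on D h"
    and deriv: "\<forall>x\<in>D. (h has_real_derivative h' x) (at x within D)"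
    and "bij_betw t D UNIV"
    and eq: "\<forall>v q. q \<in> {0..1} \<longrightarrow>
               q * \<Phi> v + (1 - q) * \<Phi> (- v)
                 - (INF v'. q * \<Phi> v' + (1 - q) * \<Phi> (- v'))
               = bregman h h' q (inv_into D t v)"
    by blast
  then have surj: "t ` D = UNIV"
    by (simp add: bij_betw_def)
  have link: "\<Phi> v - (INF v'. \<Phi> v') = bregman h h' 1 (inv_into D t v)" for v
    using eq[rule_format, of 1 v] by simp
  have "inv_into D t v = 1" if "1 \<le> v" for v
  proof (rule ccontr)
    assume "inv_into D t v \<noteq> 1"
    moreover have "inv_into D t v \<in> D"
      using inv_into_into[of v t D] surj by simp
    moreover have "1 \<in> D"
      using \<open>{0..1} \<subseteq> D\<close> by auto
    ultimately have "0 < bregman h h' 1 (inv_into D t v)"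
      using bregman_pos[OF \<open>convex D\<close> \<open>strict_convex_on D h\<close>] deriv by simp
    moreover have "(INF v'. \<Phi> v') = 0"
      using INF_nonneg_attained_eq_0[of \<Phi> 1] loss_nonneg[OF assms]
        loss_vanishes_above_one[OF assms] by simp
    ultimately show False
      using link[of v] loss_vanishes_above_one[OF assms that] by simp
  qed
  then have "t (inv_into D t 1) = t (inv_into D t 2)"
    by simp
  then show False
    using f_inv_into_f[of _ t D] surj by simp
qed

end
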